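(* Let $k\ge 2$ and let $x_0\in\Sigma_k^*$ be any word. Then the sequence $(x_n)_{n\ge 0}$ defined by $x_{n+1}=\mathcal P_k(x_n)$ is eventually periodic: there exist integers $N\ge 0$ and $p\ge 1$ such that $x_{n+p}=x_n$ for all $n\ge N$. In particular, the sequence eventually enters a fixed point ($p=1$) or a cycle.
   Context: Fix an integer $k\ge 2$ and the alphabet $\Sigma_k=\{0,1,\dots,k-1\}$. A word is a finite nonempty string of letters of $\Sigma_k$ (leading zeros allowed); $\Sigma_k^*$ denotes the set of words. For a word $x$, $|x|$ denotes its length and $|x|_i$ the number of occurrences of the letter $i$ in $x$. For a positive integer $c$, $[c]_k$ denotes its standard base-$k$ representation without leading zeros, viewed as a word over $\Sigma_k$; it has $\lfloor\log_k c\rfloor+1$ letters. The map $\mathcal P_k:\Sigma_k^*\to\Sigma_k^*$ is defined as follows: if $b_1>b_2>\dots>b_r$ are exactly the letters occurring in $x$ (i.e. those with $|x|_{b_j}\neq 0$), then $\mathcal P_k(x)=[|x|_{b_1}]_k\,b_1\,[|x|_{b_2}]_k\,b_2\cdots[|x|_{b_r}]_k\,b_r$ (concatenation). For example, for $k=10$, $\mathcal P_{10}(123)=131211$. A fixed point is a word $x$ with $\mathcal P_k(x)=x$. *)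

theory Defs
  imports Main
begin

(* standard base-k representation of a positive integer c, most significant digit first,
   without leading zeros; for c = 0 it returns [] (never used on c = 0 below) *)
fun base_rep :: "nat \<Rightarrow> nat \<Rightarrow> nat list" where
  "base_rep k c = (if c = 0 \<or> k < 2 then [] else base_rep k (c div k) @ [c mod k])"

declare base_rep.simps [simp del]

definition occ :: "nat list \<Rightarrow> nat \<Rightarrow> nat" where
  "occ x i = count_list x i"

definition is_word :: "nat \<Rightarrow> nat list \<Rightarrow> bool" where
  "is_word k x \<longleftrightarrow> x \<noteq> [] \<and> set x \<subseteq> {..<k}"

definition Pk :: "nat \<Rightarrow> nat list \<Rightarrow> nat list" where
  "Pk k x = concat (map (\<lambda>b. base_rep k (occ x b) @ [b])
                        (rev (sorted_list_of_set (set x))))"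

end

theory Submission
  imports Defs
begin

(* Each letter b of x contributes |[ |x|_b ]_k| + 1 \<le> 2 + |x|_b / k letters to P_k(x), and at
   most k letters occur, so k |P_k(x)| \<le> 2k^2 + |x|.  Hence the lengths along the orbit never
   exceed max(|x_0|, 2k^2): the orbit stays in a finite set of words and, by pigeonhole,
   is eventually periodic. *)

lemma length_base_rep_le:
  assumes "k \<ge> 2"
  shows "length (base_rep k c) \<le> 1 + c div k"
proof (induction c rule: less_induct)
  case (less c)
  show ?case
  proof (cases "c div k = 0")
    case True
    then show ?thesis
      using assms by (simp add: base_rep.simps[of k c] base_rep.simps[of k 0])
  next
    case False
    then have "c \<noteq> 0" by (metis div_0)
    then have "c div k < c" using assms by simp
    then have "length (base_rep k c) = length (base_rep k (c div k)) + 1"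
      using assms by (simp add: base_rep.simps[of k c])
    also have "\<dots> \<le> 2 + c div k div k" using less.IH[OF \<open>c div k < c\<close>] by simp
    also have "\<dots> \<le> 1 + c div k"
      using False assms by (simp add: Suc_le_eq)
    finally show ?thesis .
  qed
qed

lemma set_base_rep_subset: "set (base_rep k c) \<subseteq> {..<k}"
proof (induction c rule: less_induct)
  case (less c)
  show ?case
  proof (cases "c = 0 \<or> k < 2")
    case True
    then show ?thesis by (simp add: base_rep.simps)
  next
    case False
    then have "base_rep k c = base_rep k (c div k) @ [c mod k]" "c div k < c"
      by (simp_all add: base_rep.simps[of k c])
    then show ?thesis using less.IH False by auto
  qed
qed

lemma set_Pk_subset: "set (Pk k x) \<subseteq> {..<k} \<union> set x"
  unfolding Pk_def using set_base_rep_subset by auto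

lemma length_Pk: "length (Pk k x) = (\<Sum>b\<in>set x. length (base_rep k (occ x b)) + 1)"
proof -
  have "length (Pk k x)
      = sum_list (map (\<lambda>b. length (base_rep k (occ x b)) + 1) (rev (sorted_list_of_set (set x))))"
    unfolding Pk_def by (simp add: length_concat comp_def)
  also have "\<dots> = (\<Sum>b\<in>set x. length (base_rep k (occ x b)) + 1)"
    by (subst sum_list_distinct_conv_sum_set) auto
  finally show ?thesis .
qed

lemma length_Pk_le:
  assumes "k \<ge> 2"
  shows "k * length (Pk k x) \<le> 2 * k * card (set x) + length x"
proof -
  have "k * length (Pk k x) = (\<Sum>b\<in>set x. k * (length (base_rep k (occ x b)) + 1))"
    by (simp add: length_Pk sum_distrib_left)
  also have "\<dots> \<le> (\<Sum>b\<in>set x. 2 * k + occ x b)"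
  proof (rule sum_mono)
    fix b
    have "length (base_rep k (occ x b)) + 1 \<le> 2 + occ x b div k"
      using length_base_rep_le[OF assms] by simp
    then have "k * (length (base_rep k (occ x b)) + 1) \<le> k * (2 + occ x b div k)"
      by (rule mult_le_mono2)
    also have "\<dots> \<le> 2 * k + occ x b"
      by (simp add: algebra_simps)
    finally show "k * (length (base_rep k (occ x b)) + 1) \<le> 2 * k + occ x b" .
  qed
  also have "\<dots> = 2 * k * card (set x) + length x"
    by (simp add: sum.distrib occ_def sum_count_set)
  finally show ?thesis .
qed

lemma length_Pk_le_bound:
  assumes "k \<ge> 2" and "set x \<subseteq> {..<k}" and "length x \<le> L" and "2 * k * k \<le> L"
  shows "length (Pk k x) \<le> L"
proof -
  have "card (set x) \<le> k"
    using card_mono[OF _ assms(2)] by simp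
  then have "k * length (Pk k x) \<le> 2 * k * k + length x"
    using length_Pk_le[OF assms(1), of x] by (meson add_le_mono1 le_trans mult_le_mono2)
  also have "\<dots> \<le> k * L"
    using assms(1,3,4) by (metis add_le_mono le_trans mult_2 mult_le_mono1)
  finally show ?thesis using assms(1) by simp
qed

lemma funpow_eventually_periodic:
  assumes "finite S" and "f ` S \<subseteq> S" and "x \<in> S"
  shows "\<exists>N p. p \<ge> 1 \<and> (\<forall>n \<ge> N. (f ^^ (n + p)) x = (f ^^ n) x)"
proof -
  let ?orbit = "\<lambda>n. (f ^^ n) x"
  have "?orbit n \<in> S" for n
    by (induction n) (use assms(2,3) in auto)
  then have "card (?orbit ` {0..card S}) < card {0..card S}"
    using card_mono[OF assms(1)] by (simp add: image_subset_iff le_imp_less_Suc)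
  then have "\<not> inj_on ?orbit {0..card S}"
    by (rule pigeonhole)
  then obtain i j where "i < j" and ij: "?orbit i = ?orbit j"
    unfolding inj_on_def by (metis linorder_neqE_nat)
  have "?orbit (n + (j - i)) = ?orbit n" if "n \<ge> i" for n
  proof -
    have "?orbit (n + (j - i)) = (f ^^ (n - i)) (?orbit j)"
    proof -
      have "n + (j - i) = (n - i) + j" using that \<open>i < j\<close> by simp
      then show ?thesis by (simp only: funpow_add comp_apply)
    qed
    also have "\<dots> = ?orbit n"
    proof -
      have "n = (n - i) + i" using that by simp
      then show ?thesis by (metis ij funpow_add comp_apply)
    qed
    finally show ?thesis .
  qed
  then show ?thesis
    using \<open>i < j\<close> by (intro exI[of _ i] exI[of _ "j - i"]) auto
qed

theorem theorem1:
  fixes k :: nat and x0 :: "nat list"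
  assumes "k \<ge> 2" and "is_word k x0"
  shows "\<exists>N p. p \<ge> 1 \<and> (\<forall>n \<ge> N. (Pk k ^^ (n + p)) x0 = (Pk k ^^ n) x0)"
proof (rule funpow_eventually_periodic)
  define L where "L = max (length x0) (2 * k * k)"
  let ?S = "{x. set x \<subseteq> {..<k} \<and> length x \<le> L}"
  show "finite ?S"
    by (rule finite_lists_length_le) simp
  show "Pk k ` ?S \<subseteq> ?S"
    using set_Pk_subset length_Pk_le_bound[OF assms(1)] unfolding L_def by fastforce
  show "x0 \<in> ?S"
    using assms(2) unfolding L_def is_word_def by auto
qed

end
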